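(* For $0\le n\le m$ with $n\equiv m\pmod 2$, $$w_{m,n}(q)=\begin{cases}\dfrac{[n]!\,T_{f,n}(q^2)}{(1-q^{-2})^f}&\text{if } m=n+2f \text{ for some } f\in\mathbb N,\\ 0&\text{otherwise}.\end{cases}$$
   Context: Let $\mathbf U^\imath=\mathbb Q(q)[B]$ be the polynomial algebra in $B$ over $\mathbb Q(q)$, $[n]=(q^n-q^{-n})/(q-q^{-1})$, $[n]!=[1]\cdots[n]$. Define the PBW basis $\Delta_n\in\mathbf U^\imath$ ($n\ge0$) by $\Delta_0=1$ and $B\Delta_n=[n+1]\Delta_{n+1}+\frac{q^{n-1}}{1-q^{-2}}\Delta_{n-1}$ (with $\Delta_{-1}=0$); these form a basis of $\mathbf U^\imath$. Define $w_{m,n}(q)\in\mathbb Q(q)$ by $B^m=\sum_{n=0}^mw_{m,n}(q)\Delta_n$. For $f,n\ge0$, $T_{f,n}(q)\in\mathbb N[q]$ is the crossing generating function of chord diagrams: take $2f+n$ points labelled $1,\dots,2f+n$ clockwise on a circle after a basepoint, choose $n$ of them as endpoints of tethered chords (joined to the basepoint) and a perfect matching of the other $2f$ points into free chords; the crossing number is the number of pairs of free chords $\{a<b\},\{c<d\}$ with $a<c<b<d$ plus the number of pairs (tethered point $p$, free chord $\{a<b\}$) with $a<p<b$; $T_{f,n}(q)=\sum_{D}q^{\mathrm{cr}(D)}$ over all such diagrams $D$. *)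

theory Defs
  imports "HOL-Computational_Algebra.Polynomial" "HOL-Computational_Algebra.Fraction_Field"
begin

type_synonym qfield = "rat poly fract"

definition qq :: qfield where
  "qq = Fract [:0, 1:] 1"

definition qint :: "nat \<Rightarrow> qfield" where
  "qint n = (qq powi (int n) - qq powi (- int n)) / (qq - qq powi (-1))"

definition qfact :: "nat \<Rightarrow> qfield" where
  "qfact n = (\<Prod>i = 1..n. qint i)"

text \<open>U^i = Q(q)[B], B the polynomial variable.\<close>
definition BB :: "qfield poly" where
  "BB = [:0, 1:]"

text \<open>PBW basis: B Delta_k = [k+1] Delta_(k+1) + q^(k-1)/(1-q^-2) Delta_(k-1), Delta_(-1)=0.\<close>
fun Delta :: "nat \<Rightarrow> qfield poly" where
  "Delta 0 = 1"
| "Delta (Suc 0) = smult (1 / qint 1) (BB * Delta 0)"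
| "Delta (Suc (Suc n)) =
     smult (1 / qint (Suc (Suc n)))
       (BB * Delta (Suc n) - smult (qq powi (int n) / (1 - qq powi (-2))) (Delta n))"

definition wcoeff :: "nat \<Rightarrow> nat \<Rightarrow> qfield" where
  "wcoeff m = (THE c. (\<forall>k>m. c k = 0) \<and> BB ^ m = (\<Sum>k\<le>m. smult (c k) (Delta k)))"

text \<open>Chord diagrams with f free chords and n tethered chords on points 1..2f+n:
  a set S of tethered points and a perfect matching M of the remaining points,
  each free chord recorded as a pair (a,b) with a<b.\<close>
definition chord_diagrams :: "nat \<Rightarrow> nat \<Rightarrow> (nat set \<times> (nat \<times> nat) set) set" where
  "chord_diagrams f n = {(S, M).
     S \<subseteq> {1..2*f+n} \<and> card S = n \<and>
     (\<forall>(a,b)\<in>M. a < b \<and> a \<in> {1..2*f+n} - S \<and> b \<in> {1..2*f+n} - S) \<and>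
     (\<forall>p\<in>{1..2*f+n} - S. \<exists>!ch. ch \<in> M \<and> (fst ch = p \<or> snd ch = p))}"

definition crossings :: "nat set \<times> (nat \<times> nat) set \<Rightarrow> nat" where
  "crossings D = (case D of (S, M) \<Rightarrow>
      card {(ch1, ch2). ch1 \<in> M \<and> ch2 \<in> M \<and>
              fst ch1 < fst ch2 \<and> fst ch2 < snd ch1 \<and> snd ch1 < snd ch2}
    + card {(p, ch). p \<in> S \<and> ch \<in> M \<and> fst ch < p \<and> p < snd ch})"

definition Tpoly :: "nat \<Rightarrow> nat \<Rightarrow> nat poly" where
  "Tpoly f n = (\<Sum>D\<in>chord_diagrams f n. monom 1 (crossings D))"

end

theory Submission
  imports Defs
begin

text \<open>
  Multiplying \<open>B\<^sup>m = \<Sum>\<^sub>k w(m,k) \<Delta>\<^sub>k\<close> by \<open>B\<close> and using the three-term recursion of the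
  \<open>\<Delta>\<^sub>k\<close> gives \<open>w(m+1,n) = [n] w(m,n-1) + q\<^sup>n/(1-q\<^sup>-\<^sup>2) w(m,n+1)\<close>.
  On the diagram side, classify the diagrams by their last point \<open>N\<close>. If it is tethered,
  deleting it changes no crossing, which gives \<open>T(f,n-1)\<close>. Otherwise it is the right end of
  a free chord \<open>(a,N)\<close>; replacing this chord by a tethered point \<open>a\<close> removes exactly the
  crossings of \<open>(a,N)\<close> with the tethered points right of \<open>a\<close>, and as \<open>a\<close> runs through the
  \<open>n+1\<close> tethered points of the smaller diagram their number runs through \<open>0, \<dots>, n\<close>. Hence
  \<open>T(f,n) = T(f,n-1) + (1 + x + \<dots> + x\<^sup>n) T(f-1,n+1)\<close>. Since
  \<open>q\<^sup>n [n+1] = 1 + q\<^sup>2 + \<dots> + q\<^sup>2\<^sup>n\<close>, the closed formula satisfies the recursion of \<open>w\<close>,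
  and both start from \<open>w(0,0) = 1\<close>.
\<close>

section \<open>Quantum integers\<close>

lemma power_times_qint_eq_geometric_sum:
  fixes y :: "'a::field"
  assumes "y \<noteq> 0" "y ^ 2 \<noteq> 1"
  shows "y ^ n * ((y ^ Suc n - inverse (y ^ Suc n)) / (y - inverse y)) = (\<Sum>i\<le>n. (y ^ 2) ^ i)"
proof -
  have "y ^ 2 - 1 \<noteq> 0" "y - inverse y = (y ^ 2 - 1) / y"
    using assms by (simp_all add: field_simps power2_eq_square)
  moreover have "y ^ Suc n - inverse (y ^ Suc n) = ((y ^ 2) ^ Suc n - 1) / y ^ Suc n"
    using assms by (simp add: field_simps power2_eq_square)
  ultimately have "y ^ n * ((y ^ Suc n - inverse (y ^ Suc n)) / (y - inverse y))
      = ((y ^ 2) ^ Suc n - 1) / (y ^ 2 - 1)"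
    using assms by (simp add: field_simps)
  also have "\<dots> = (\<Sum>i\<le>n. (y ^ 2) ^ i)"
    using assms geometric_sum[of "y ^ 2" "Suc n"] by (simp add: lessThan_Suc_atMost)
  finally show ?thesis .
qed

lemma qq_power: "qq ^ k = Fract (monom 1 k) 1"
  by (induction k) (simp_all add: qq_def monom_Suc One_fract_def flip: monom_0)

lemma qq_power_eq_1_iff: "qq ^ k = 1 \<longleftrightarrow> k = 0"
proof
  assume "qq ^ k = 1"
  then have "monom (1::rat) k = 1"
    by (simp add: qq_power eq_fract One_fract_def)
  then show "k = 0"
    by (simp add: monom_eq_1_iff)
qed simp

lemma qq_nonzero: "qq \<noteq> 0"
  by (simp add: qq_def eq_fract Zero_fract_def)

lemma qint_Suc_eq_geometric_sum: "qq ^ n * qint (Suc n) = (\<Sum>i\<le>n. (qq ^ 2) ^ i)"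
proof -
  have "qint k = (qq ^ k - inverse (qq ^ k)) / (qq - inverse qq)" for k
    by (simp add: qint_def power_int_minus)
  then show ?thesis
    using power_times_qint_eq_geometric_sum[OF qq_nonzero] qq_power_eq_1_iff[of 2] by simp
qed

lemma qint_nonzero:
  assumes "0 < n"
  shows "qint n \<noteq> 0"
proof -
  obtain k where n: "n = Suc k"
    using assms gr0_implies_Suc by blast
  have "(qq ^ 2) ^ Suc k \<noteq> 1" "qq ^ 2 \<noteq> 1"
    by (simp_all only: power_mult[symmetric] qq_power_eq_1_iff) simp_all
  then have "(\<Sum>i\<le>k. (qq ^ 2) ^ i) \<noteq> 0"
    using geometric_sum[of "qq ^ 2" "Suc k"] by (simp add: lessThan_Suc_atMost)
  then show ?thesis
    using qint_Suc_eq_geometric_sum[of k] n by auto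
qed

lemma qint_1 [simp]: "qint (Suc 0) = 1"
  using qint_Suc_eq_geometric_sum[of 0] by simp

lemma qfact_Suc: "qfact (Suc n) = qfact n * qint (Suc n)"
  by (simp add: qfact_def prod.nat_ivl_Suc')

section \<open>Coefficients of powers of B in the PBW basis\<close>

abbreviation qden :: qfield where
  "qden \<equiv> 1 - qq powi (-2)"

lemma qden_nonzero: "qden \<noteq> 0"
  using qq_nonzero qq_power_eq_1_iff[of 2] by (auto simp: power_int_minus field_simps)

definition lower_coeff :: "nat \<Rightarrow> qfield" where
  "lower_coeff k = qq ^ k / qden"

lemma BB_times_Delta:
  "BB * Delta k = smult (qint (Suc k)) (Delta (Suc k))
     + (case k of 0 \<Rightarrow> 0 | Suc j \<Rightarrow> smult (lower_coeff j) (Delta j))"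
  using qint_nonzero[of "Suc k"] by (cases k) (simp_all add: lower_coeff_def)

lemma Delta_degree: "degree (Delta k) \<le> k \<and> coeff (Delta k) k \<noteq> 0"
proof (induction k rule: Delta.induct)
  case (3 n)
  have "degree (BB * Delta (Suc n)) \<le> Suc (Suc n)" "coeff (Delta n) (Suc (Suc n)) = 0"
    using 3 by (simp_all add: BB_def degree_pCons_le coeff_eq_0)
  moreover have "degree (smult c (Delta n)) \<le> Suc (Suc n)" for c :: qfield
    using 3 degree_smult_le[of c "Delta n"] by linarith
  ultimately show ?case
    using 3 qint_nonzero[of "Suc (Suc n)"]
    by (simp del: Delta.simps add: Delta.simps(3)[of n] degree_diff_le BB_def)
qed (simp_all add: BB_def)

lemma triangular_family_independent:
  fixes p :: "nat \<Rightarrow> 'a::idom poly"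
  assumes "\<And>k. degree (p k) \<le> k" "\<And>k. coeff (p k) k \<noteq> 0"
    and "(\<Sum>k\<le>m. smult (e k) (p k)) = 0" "k \<le> m"
  shows "e k = 0"
  using assms(3,4)
proof (induction m arbitrary: k)
  case 0
  then show ?case using assms(2)[of 0] by auto
next
  case (Suc m)
  have "coeff (p k) (Suc m) = 0" if "k \<le> m" for k
    using assms(1)[of k] that by (intro coeff_eq_0) simp
  then have "coeff (\<Sum>k\<le>Suc m. smult (e k) (p k)) (Suc m) = e (Suc m) * coeff (p (Suc m)) (Suc m)"
    by (simp add: coeff_sum)
  then have "e (Suc m) * coeff (p (Suc m)) (Suc m) = 0"
    using Suc.prems(1) by (metis coeff_0)
  then have "e (Suc m) = 0"
    using assms(2) by simp
  with Suc show ?case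
    by (cases "k = Suc m") simp_all
qed

fun pbw_coeff :: "nat \<Rightarrow> nat \<Rightarrow> qfield" where
  "pbw_coeff 0 n = (if n = 0 then 1 else 0)"
| "pbw_coeff (Suc m) n =
     (case n of 0 \<Rightarrow> 0 | Suc j \<Rightarrow> qint n * pbw_coeff m j) + lower_coeff n * pbw_coeff m (Suc n)"

lemma pbw_coeff_nonzeroD: "pbw_coeff m n \<noteq> 0 \<Longrightarrow> \<exists>f. m = n + 2 * f"
proof (induction m arbitrary: n)
  case (Suc m)
  then consider j where "n = Suc j" "pbw_coeff m j \<noteq> 0" | "pbw_coeff m (Suc n) \<noteq> 0"
    by (cases n; force)
  then show ?case
  proof cases
    case 1
    then show ?thesis using Suc.IH by fastforce
  next
    case 2
    then obtain f where "m = Suc n + 2 * f" using Suc.IH by blast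
    then have "Suc m = n + 2 * Suc f" by simp
    then show ?thesis ..
  qed
qed (simp split: if_splits)

lemma pbw_coeff_eq_0: "m < n \<Longrightarrow> pbw_coeff m n = 0"
  using pbw_coeff_nonzeroD by fastforce

lemma BB_power_expansion: "BB ^ m = (\<Sum>k\<le>m. smult (pbw_coeff m k) (Delta k))"
proof (induction m)
  case (Suc m)
  let ?w = "pbw_coeff m"
  have "BB ^ Suc m = (\<Sum>k\<le>m. smult (?w k) (BB * Delta k))"
    using Suc by (simp add: sum_distrib_left)
  also have "\<dots> = (\<Sum>k\<le>m. smult (?w k * qint (Suc k)) (Delta (Suc k)))
      + (\<Sum>k\<le>m. smult (?w k) (case k of 0 \<Rightarrow> 0 | Suc j \<Rightarrow> smult (lower_coeff j) (Delta j)))"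
    unfolding BB_times_Delta by (simp add: smult_add_right sum.distrib)
  also have "(\<Sum>k\<le>m. smult (?w k * qint (Suc k)) (Delta (Suc k)))
      = (\<Sum>k\<le>Suc m. smult (case k of 0 \<Rightarrow> 0 | Suc j \<Rightarrow> qint k * ?w j) (Delta k))"
    by (subst sum.atMost_Suc_shift) (simp add: mult.commute)
  also have "(\<Sum>k\<le>m. smult (?w k) (case k of 0 \<Rightarrow> 0 | Suc j \<Rightarrow> smult (lower_coeff j) (Delta j)))
      = (\<Sum>k\<le>Suc m. smult (?w k) (case k of 0 \<Rightarrow> 0 | Suc j \<Rightarrow> smult (lower_coeff j) (Delta j)))"
    by (simp add: pbw_coeff_eq_0)
  also have "\<dots> = (\<Sum>k\<le>m. smult (lower_coeff k * ?w (Suc k)) (Delta k))"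
    by (subst sum.atMost_Suc_shift) (simp add: mult.commute)
  also have "\<dots> = (\<Sum>k\<le>Suc m. smult (lower_coeff k * ?w (Suc k)) (Delta k))"
    by (simp add: pbw_coeff_eq_0)
  finally show ?case
    by (simp add: sum.distrib[symmetric] smult_add_left)
qed simp

lemma wcoeff_eq_pbw_coeff: "wcoeff m = pbw_coeff m"
  unfolding wcoeff_def
proof (rule the_equality)
  show "(\<forall>k>m. pbw_coeff m k = 0) \<and> BB ^ m = (\<Sum>k\<le>m. smult (pbw_coeff m k) (Delta k))"
    using pbw_coeff_eq_0 BB_power_expansion by blast
next
  fix c
  assume c: "(\<forall>k>m. c k = 0) \<and> BB ^ m = (\<Sum>k\<le>m. smult (c k) (Delta k))"
  then have "(\<Sum>k\<le>m. smult (c k - pbw_coeff m k) (Delta k)) = 0"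
    using BB_power_expansion[of m] by (simp add: smult_diff_left sum_subtractf)
  then have "c k = pbw_coeff m k" if "k \<le> m" for k
    using triangular_family_independent[of Delta] Delta_degree that by fastforce
  then show "c = pbw_coeff m"
    using c pbw_coeff_eq_0 by (metis not_le ext)
qed

section \<open>Chord diagrams and their crossings\<close>

definition chord_diagram :: "nat \<Rightarrow> nat set \<Rightarrow> (nat \<times> nat) set \<Rightarrow> bool" where
  "chord_diagram N S M \<longleftrightarrow> S \<subseteq> {1..N} \<and>
     (\<forall>(a, b)\<in>M. a < b \<and> a \<in> {1..N} - S \<and> b \<in> {1..N} - S) \<and>
     (\<forall>p\<in>{1..N} - S. \<exists>!ch. ch \<in> M \<and> (fst ch = p \<or> snd ch = p))"

lemma mem_chord_diagrams_iff:
  "(S, M) \<in> chord_diagrams f n \<longleftrightarrow> chord_diagram (2 * f + n) S M \<and> card S = n"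
  unfolding chord_diagrams_def chord_diagram_def by auto

lemma chord_diagram_iff:
  "chord_diagram N S M \<longleftrightarrow> S \<subseteq> {1..N} \<and> (\<forall>x\<in>M. fst x < snd x) \<and>
     fst ` M \<union> snd ` M = {1..N} - S \<and>
     (\<forall>x\<in>M. \<forall>y\<in>M. x \<noteq> y \<longrightarrow> {fst x, snd x} \<inter> {fst y, snd y} = {})"
  (is "_ \<longleftrightarrow> ?sub \<and> ?ordered \<and> ?ends \<and> ?disjoint")
proof
  assume cd: "chord_diagram N S M"
  then have ?sub ?ordered and ends: "fst ` M \<union> snd ` M \<subseteq> {1..N} - S"
    unfolding chord_diagram_def by fastforce+
  moreover have "{1..N} - S \<subseteq> fst ` M \<union> snd ` M"
  proof
    fix p
    assume "p \<in> {1..N} - S"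
    then obtain x where "x \<in> M" "fst x = p \<or> snd x = p"
      using cd unfolding chord_diagram_def by blast
    then show "p \<in> fst ` M \<union> snd ` M"
      by auto
  qed
  moreover have "x = y" if "x \<in> M" "y \<in> M" "p \<in> {fst x, snd x}" "p \<in> {fst y, snd y}" for x y p
  proof -
    have "p \<in> {1..N} - S"
      using that(1,3) ends by auto
    then have "\<exists>\<^sub>\<le>\<^sub>1ch. ch \<in> M \<and> (fst ch = p \<or> snd ch = p)"
      using cd unfolding chord_diagram_def ex1_iff_ex_Uniq by blast
    moreover have "x \<in> M \<and> (fst x = p \<or> snd x = p)" "y \<in> M \<and> (fst y = p \<or> snd y = p)"
      using that by auto
    ultimately show ?thesis
      by (rule Uniq_D)
  qed
  then have ?disjoint
    by blast
  ultimately show "?sub \<and> ?ordered \<and> ?ends \<and> ?disjoint"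
    by blast
next
  assume "?sub \<and> ?ordered \<and> ?ends \<and> ?disjoint"
  then have sub: ?sub and ordered: ?ordered and ends: ?ends and disjoint: ?disjoint
    by blast+
  have "\<exists>!ch. ch \<in> M \<and> (fst ch = p \<or> snd ch = p)" if "p \<in> {1..N} - S" for p
  proof -
    have "p \<in> fst ` M \<union> snd ` M"
      using that ends by blast
    then obtain x where x: "x \<in> M" "fst x = p \<or> snd x = p"
      by auto
    moreover have "y = x" if "y \<in> M" "fst y = p \<or> snd y = p" for y
    proof (rule ccontr)
      assume "y \<noteq> x"
      then have "{fst y, snd y} \<inter> {fst x, snd x} = {}"
        using disjoint x(1) that(1) by blast
      then show False
        using x(2) that(2) by auto
    qed
    ultimately show ?thesis
      by blast
  qed
  moreover have "a < b \<and> a \<in> {1..N} - S \<and> b \<in> {1..N} - S" if "(a, b) \<in> M" for a b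
  proof -
    have "a \<in> fst ` M" "b \<in> snd ` M"
      using that by force+
    then show ?thesis
      using that ordered ends by fastforce
  qed
  ultimately show "chord_diagram N S M"
    unfolding chord_diagram_def using sub by blast
qed

lemma chord_diagram_chordD:
  assumes "chord_diagram N S M" "(a, b) \<in> M"
  shows "a < b" "1 \<le> a" "b \<le> N" "a \<notin> S" "b \<notin> S"
  using assms unfolding chord_diagram_def by fastforce+

lemma chord_diagram_tethered_last_iff:
  assumes "Suc N \<in> S"
  shows "chord_diagram (Suc N) S M \<longleftrightarrow> chord_diagram N (S - {Suc N}) M"
proof -
  have "{1..Suc N} - S = {1..N} - (S - {Suc N})"
    using assms by (auto simp: le_Suc_eq)
  moreover have "S \<subseteq> {1..Suc N} \<longleftrightarrow> S - {Suc N} \<subseteq> {1..N}"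
    using assms by (auto simp: subset_iff le_Suc_eq)
  ultimately show ?thesis
    unfolding chord_diagram_iff by simp
qed

lemma chord_diagram_untether:
  assumes cd: "chord_diagram N S M" and "a \<in> S"
  shows "chord_diagram (Suc N) (S - {a}) (insert (a, Suc N) M)"
proof -
  have chord: "fst c \<noteq> a" "snd c \<noteq> a" "snd c \<noteq> Suc N" "fst c \<noteq> Suc N" if "c \<in> M" for c
    using chord_diagram_chordD[OF cd, of "fst c" "snd c"] that \<open>a \<in> S\<close> by auto
  have "fst ` M \<union> snd ` M = {1..N} - S" "S \<subseteq> {1..N}"
    using cd unfolding chord_diagram_iff by blast+
  then have "fst ` insert (a, Suc N) M \<union> snd ` insert (a, Suc N) M = {1..Suc N} - (S - {a})"
    using \<open>a \<in> S\<close> by (auto simp: le_Suc_eq)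
  then show ?thesis
    using cd \<open>a \<in> S\<close> unfolding chord_diagram_iff by (auto dest: chord)
qed

lemma chord_diagram_tether:
  assumes cd: "chord_diagram (Suc N) S M" and aN: "(a, Suc N) \<in> M"
  shows "chord_diagram N (insert a S) (M - {(a, Suc N)})"
proof -
  have ends: "fst ` M \<union> snd ` M = {1..Suc N} - S" and sub: "S \<subseteq> {1..Suc N}"
    and ordered: "\<forall>x\<in>M. fst x < snd x"
    and disjoint: "\<forall>x\<in>M. \<forall>y\<in>M. x \<noteq> y \<longrightarrow> {fst x, snd x} \<inter> {fst y, snd y} = {}"
    using cd unfolding chord_diagram_iff by blast+
  have other: "fst c \<noteq> a" "snd c \<noteq> a" "fst c \<noteq> Suc N" "snd c \<noteq> Suc N"
    if "c \<in> M" "c \<noteq> (a, Suc N)" for c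
    using disjoint[rule_format, OF that(1) aN] that(2) by auto
  have "a \<in> fst ` M" "Suc N \<in> snd ` M"
    using aN by force+
  then have a: "a \<in> {1..Suc N} - S" and N: "Suc N \<notin> S"
    using ends by blast+
  have "a < Suc N"
    using aN ordered by force
  have "fst ` (M - {(a, Suc N)}) \<union> snd ` (M - {(a, Suc N)}) = (fst ` M \<union> snd ` M) - {a, Suc N}"
    using aN by (auto dest: other)
  also have "\<dots> = {1..N} - insert a S"
    unfolding ends by (auto simp: le_Suc_eq)
  finally have "fst ` (M - {(a, Suc N)}) \<union> snd ` (M - {(a, Suc N)}) = {1..N} - insert a S" .
  moreover have "insert a S \<subseteq> {1..N}"
    using sub a N \<open>a < Suc N\<close> by (auto simp: subset_iff le_Suc_eq)
  moreover have "\<forall>x\<in>M - {(a, Suc N)}. fst x < snd x"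
    using ordered by blast
  moreover have "\<forall>x\<in>M - {(a, Suc N)}. \<forall>y\<in>M - {(a, Suc N)}.
      x \<noteq> y \<longrightarrow> {fst x, snd x} \<inter> {fst y, snd y} = {}"
    using disjoint by blast
  ultimately show ?thesis
    unfolding chord_diagram_iff by (intro conjI)
qed

lemma chord_diagram_finite:
  assumes "chord_diagram N S M"
  shows "finite S" "finite M"
proof -
  have "S \<subseteq> {1..N}"
    using assms unfolding chord_diagram_def by blast
  then show "finite S"
    by (rule finite_subset) simp
  have "M \<subseteq> {1..N} \<times> {1..N}"
    using chord_diagram_chordD[OF assms] by fastforce
  then show "finite M"
    by (rule finite_subset) simp
qed

lemma chord_diagram_le:
  assumes "chord_diagram N S M"
  shows "\<forall>p\<in>S. p \<le> N" "\<forall>c\<in>M. snd c \<le> N"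
  using assms chord_diagram_chordD(3)[OF assms] unfolding chord_diagram_def by auto

lemma mem_chord_diagramsD:
  assumes "(S, M) \<in> chord_diagrams f n"
  shows "chord_diagram (2 * f + n) S M" "card S = n" "finite S" "finite M"
    "Suc (2 * f + n) \<notin> S" "(b, Suc (2 * f + n)) \<notin> M"
proof -
  show cd: "chord_diagram (2 * f + n) S M" "card S = n"
    using assms by (simp_all add: mem_chord_diagrams_iff)
  show "finite S" "finite M"
    using chord_diagram_finite[OF cd(1)] by blast+
  show "Suc (2 * f + n) \<notin> S" "(b, Suc (2 * f + n)) \<notin> M"
    using chord_diagram_le[OF cd(1)] by fastforce+
qed

lemma finite_chord_diagrams: "finite (chord_diagrams f n)"
proof (rule finite_subset)
  show "chord_diagrams f n \<subseteq> Pow {1..2 * f + n} \<times> Pow ({1..2 * f + n} \<times> {1..2 * f + n})"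
    using chord_diagram_chordD unfolding chord_diagrams_def chord_diagram_def by fastforce
qed simp

definition free_crossings :: "(nat \<times> nat) set \<Rightarrow> ((nat \<times> nat) \<times> (nat \<times> nat)) set" where
  "free_crossings M = {(c, d). c \<in> M \<and> d \<in> M \<and> fst c < fst d \<and> fst d < snd c \<and> snd c < snd d}"

definition tethered_crossings :: "nat set \<Rightarrow> (nat \<times> nat) set \<Rightarrow> (nat \<times> (nat \<times> nat)) set" where
  "tethered_crossings S M = {(p, c). p \<in> S \<and> c \<in> M \<and> fst c < p \<and> p < snd c}"

lemma crossings_eq: "crossings (S, M) = card (free_crossings M) + card (tethered_crossings S M)"
  unfolding crossings_def free_crossings_def tethered_crossings_def by simp

lemma finite_free_crossings: "finite M \<Longrightarrow> finite (free_crossings M)"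
  by (rule finite_subset[of _ "M \<times> M"]) (auto simp: free_crossings_def)

lemma finite_tethered_crossings: "finite S \<Longrightarrow> finite M \<Longrightarrow> finite (tethered_crossings S M)"
  by (rule finite_subset[of _ "S \<times> M"]) (auto simp: tethered_crossings_def)

lemma crossings_insert_tethered:
  assumes "\<forall>c\<in>M. snd c \<le> N"
  shows "crossings (insert (Suc N) S, M) = crossings (S, M)"
proof -
  have "tethered_crossings (insert (Suc N) S) M = tethered_crossings S M"
    using assms unfolding tethered_crossings_def by fastforce
  then show ?thesis
    by (simp add: crossings_eq)
qed

lemma crossings_untether:
  assumes fin: "finite S" "finite M" and bounds: "\<forall>c\<in>M. snd c \<le> N" "\<forall>p\<in>S. p \<le> N"
    and "a \<in> S"
  shows "crossings (S - {a}, insert (a, Suc N) M) = crossings (S, M) + card {p\<in>S. a < p}"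
proof -
  define X where "X = {c\<in>M. fst c < a \<and> a < snd c}"
  have free: "free_crossings (insert (a, Suc N) M) = free_crossings M \<union> (\<lambda>c. (c, (a, Suc N))) ` X"
    using bounds unfolding free_crossings_def X_def by fastforce
  have new_tethered: "tethered_crossings (S - {a}) (insert (a, Suc N) M)
      = tethered_crossings (S - {a}) M \<union> (\<lambda>p. (p, (a, Suc N))) ` {p\<in>S. a < p}"
    using bounds unfolding tethered_crossings_def by fastforce
  have old_tethered: "tethered_crossings S M = tethered_crossings (S - {a}) M \<union> Pair a ` X"
    using \<open>a \<in> S\<close> unfolding tethered_crossings_def X_def by fastforce
  have "(a, Suc N) \<notin> M"
    using bounds by fastforce
  have "card (free_crossings (insert (a, Suc N) M)) = card (free_crossings M) + card X"
    unfolding free using fin finite_free_crossings[OF fin(2)] \<open>(a, Suc N) \<notin> M\<close>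
    by (subst card_Un_disjoint)
      (auto simp: X_def card_image inj_on_def free_crossings_def)
  moreover have "card (tethered_crossings (S - {a}) (insert (a, Suc N) M))
       = card (tethered_crossings (S - {a}) M) + card {p\<in>S. a < p}"
    unfolding new_tethered using fin finite_tethered_crossings[OF _ fin(2), of "S - {a}"]
      \<open>(a, Suc N) \<notin> M\<close>
    by (subst card_Un_disjoint)
      (auto simp: card_image inj_on_def tethered_crossings_def)
  moreover have "card (tethered_crossings S M) = card (tethered_crossings (S - {a}) M) + card X"
    unfolding old_tethered using fin finite_tethered_crossings[OF _ fin(2), of "S - {a}"]
    by (subst card_Un_disjoint)
      (auto simp: X_def card_image inj_on_def tethered_crossings_def)
  ultimately show ?thesis
    by (simp add: crossings_eq)
qed

section \<open>The recursion for the crossing polynomials\<close>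

lemma sum_card_greater_eq_sum_lessThan:
  fixes S :: "'a::linorder set"
  assumes "finite S"
  shows "(\<Sum>a\<in>S. h (card {p\<in>S. a < p})) = (\<Sum>i<card S. h i)"
proof -
  let ?r = "\<lambda>a. card {p\<in>S. a < p}"
  have "?r b < ?r a" if "a \<in> S" "b \<in> S" "a < b" for a b
    using that assms by (intro psubset_card_mono) auto
  then have "inj_on ?r S"
    by (intro linorder_inj_onI') (metis less_irrefl)
  moreover have "?r ` S \<subseteq> {..<card S}"
    using assms by (auto intro!: psubset_card_mono)
  ultimately have "bij_betw ?r S {..<card S}"
    by (simp add: bij_betw_def card_subset_eq card_image)
  then show ?thesis
    by (rule sum.reindex_bij_betw)
qed

definition crossing_sum :: "'a::comm_semiring_1 \<Rightarrow> nat \<Rightarrow> nat \<Rightarrow> 'a" where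
  "crossing_sum x f n = (\<Sum>D\<in>chord_diagrams f n. x ^ crossings D)"

lemma map_poly_of_nat_sum:
  "map_poly (of_nat :: nat \<Rightarrow> 'a::comm_semiring_1) (\<Sum>a\<in>A. p a) = (\<Sum>a\<in>A. map_poly of_nat (p a))"
  by (rule poly_eqI) (simp add: coeff_map_poly coeff_sum)

lemma poly_Tpoly: "poly (map_poly of_nat (Tpoly f n)) x = crossing_sum x f n"
  by (simp add: Tpoly_def crossing_sum_def map_poly_of_nat_sum map_poly_monom poly_sum poly_monom)

lemma crossing_sum_0_0: "crossing_sum x 0 0 = 1"
proof -
  have "chord_diagrams 0 0 = {({}, {})}"
    using chord_diagram_chordD[of 0] by (fastforce simp: mem_chord_diagrams_iff chord_diagram_def)
  then show ?thesis
    by (simp add: crossing_sum_def crossings_eq free_crossings_def tethered_crossings_def)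
qed

lemma tether_last_image:
  "(\<lambda>(S, M). (insert (Suc (2 * f + n)) S, M)) ` chord_diagrams f n
    = {D\<in>chord_diagrams f (Suc n). Suc (2 * f + n) \<in> fst D}"
  (is "?tether ` _ = _")
proof (intro equalityI subsetI)
  fix D
  assume "D \<in> ?tether ` chord_diagrams f n"
  then obtain S M where D: "D = (insert (Suc (2 * f + n)) S, M)" "(S, M) \<in> chord_diagrams f n"
    by auto
  then show "D \<in> {D\<in>chord_diagrams f (Suc n). Suc (2 * f + n) \<in> fst D}"
    using mem_chord_diagramsD[OF D(2)]
      chord_diagram_tethered_last_iff[of "2 * f + n" "insert (Suc (2 * f + n)) S" M]
    by (simp add: mem_chord_diagrams_iff)
next
  fix D
  assume "D \<in> {D\<in>chord_diagrams f (Suc n). Suc (2 * f + n) \<in> fst D}"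
  then obtain S M where D: "D = (S, M)" "(S, M) \<in> chord_diagrams f (Suc n)" "Suc (2 * f + n) \<in> S"
    by (cases D) auto
  then have "(S - {Suc (2 * f + n)}, M) \<in> chord_diagrams f n"
    using chord_diagram_tethered_last_iff[of "2 * f + n" S M] mem_chord_diagramsD(3)[OF D(2)]
    by (simp add: mem_chord_diagrams_iff)
  moreover have "D = ?tether (S - {Suc (2 * f + n)}, M)"
    using D by auto
  ultimately show "D \<in> ?tether ` chord_diagrams f n"
    by blast
qed

lemma sum_chord_diagrams_last_tethered:
  "(\<Sum>D\<in>{D\<in>chord_diagrams f (Suc n). Suc (2 * f + n) \<in> fst D}. x ^ crossings D)
    = crossing_sum x f n"
proof -
  let ?tether = "\<lambda>(S, M). (insert (Suc (2 * f + n)) S, M)"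
  have "inj_on ?tether (chord_diagrams f n)"
  proof (rule inj_onI)
    fix D E
    assume "D \<in> chord_diagrams f n" "E \<in> chord_diagrams f n" "?tether D = ?tether E"
    then show "D = E"
      using mem_chord_diagramsD(5) by (cases D, cases E) (simp add: insert_ident)
  qed
  moreover have "crossings (?tether D) = crossings D" if "D \<in> chord_diagrams f n" for D
    using that chord_diagram_le[OF mem_chord_diagramsD(1)]
    by (cases D) (simp add: crossings_insert_tethered)
  ultimately show ?thesis
    unfolding crossing_sum_def tether_last_image[symmetric] by (simp add: sum.reindex)
qed

lemma chord_diagram_last_chord:
  assumes "chord_diagram (Suc N) S M" "Suc N \<notin> S"
  obtains a where "(a, Suc N) \<in> M"
proof -
  have "Suc N \<in> fst ` M \<union> snd ` M"
    using assms unfolding chord_diagram_iff by auto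
  moreover have "fst c \<noteq> Suc N" if "c \<in> M" for c
    using chord_diagram_chordD(1,3)[OF assms(1), of "fst c" "snd c"] that by auto
  ultimately show ?thesis
    using that by force
qed

fun untether :: "nat \<Rightarrow> (nat set \<times> (nat \<times> nat) set) \<times> nat \<Rightarrow> nat set \<times> (nat \<times> nat) set" where
  "untether N ((S, M), a) = (S - {a}, insert (a, N) M)"

lemma inj_on_untether:
  "inj_on (untether (Suc (Suc (2 * g + n)))) (Sigma (chord_diagrams g (Suc n)) fst)"
proof (rule inj_onI)
  let ?N = "Suc (Suc (2 * g + n))"
  fix z z'
  assume "z \<in> Sigma (chord_diagrams g (Suc n)) fst" "z' \<in> Sigma (chord_diagrams g (Suc n)) fst"
    and eq: "untether ?N z = untether ?N z'"
  moreover obtain S M a S' M' a' where z: "z = ((S, M), a)" "z' = ((S', M'), a')"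
    by (metis prod.collapse)
  ultimately have SM: "(S, M) \<in> chord_diagrams g (Suc n)" "(S', M') \<in> chord_diagrams g (Suc n)"
    and "a \<in> S" "a' \<in> S'"
    by auto
  have S: "S - {a} = S' - {a'}" and M: "insert (a, ?N) M = insert (a', ?N) M'"
    using eq z by auto
  have "(b, ?N) \<notin> M" "(b, ?N) \<notin> M'" for b
    using mem_chord_diagramsD(6)[OF SM(1)] mem_chord_diagramsD(6)[OF SM(2)] by simp_all
  then have "a = a'"
    using M by blast
  then have "M = M'" "S = S'"
    using M S \<open>a \<in> S\<close> \<open>a' \<in> S'\<close> \<open>\<And>b. (b, ?N) \<notin> M\<close> \<open>\<And>b. (b, ?N) \<notin> M'\<close>
    by (simp_all add: insert_ident) (metis insert_Diff)
  then show "z = z'"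
    using z \<open>a = a'\<close> by simp
qed

lemma untether_image:
  "untether (Suc (Suc (2 * g + n))) ` Sigma (chord_diagrams g (Suc n)) fst
    = {D\<in>chord_diagrams (Suc g) n. Suc (Suc (2 * g + n)) \<notin> fst D}"
proof (intro equalityI subsetI)
  let ?N = "Suc (Suc (2 * g + n))"
  fix D
  assume "D \<in> untether ?N ` Sigma (chord_diagrams g (Suc n)) fst"
  then obtain S M a where D: "D = (S - {a}, insert (a, ?N) M)"
    and SM: "(S, M) \<in> chord_diagrams g (Suc n)" and "a \<in> S"
    by auto
  have "chord_diagram ?N (S - {a}) (insert (a, ?N) M)"
    using chord_diagram_untether mem_chord_diagramsD(1)[OF SM] \<open>a \<in> S\<close> by simp
  moreover have "card (S - {a}) = n"
    using mem_chord_diagramsD(2,3)[OF SM] \<open>a \<in> S\<close> by simp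
  ultimately show "D \<in> {D\<in>chord_diagrams (Suc g) n. ?N \<notin> fst D}"
    using D mem_chord_diagramsD(5)[OF SM] by (simp add: mem_chord_diagrams_iff)
next
  let ?N = "Suc (Suc (2 * g + n))"
  fix D
  assume "D \<in> {D\<in>chord_diagrams (Suc g) n. ?N \<notin> fst D}"
  then obtain S M where D: "D = (S, M)" and cd: "chord_diagram ?N S M"
    and "card S = n" "?N \<notin> S"
    by (cases D) (auto simp: mem_chord_diagrams_iff)
  then obtain a where a: "(a, ?N) \<in> M"
    using chord_diagram_last_chord by blast
  then have "a \<notin> S" "finite S"
    using chord_diagram_chordD(4)[OF cd] chord_diagram_finite(1)[OF cd] by blast+
  then have "((insert a S, M - {(a, ?N)}), a) \<in> Sigma (chord_diagrams g (Suc n)) fst"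
    using chord_diagram_tether[OF cd[simplified] a[simplified]] \<open>card S = n\<close>
    by (simp add: mem_chord_diagrams_iff)
  moreover have "D = untether ?N ((insert a S, M - {(a, ?N)}), a)"
    using D a \<open>a \<notin> S\<close> by (simp add: insert_absorb)
  ultimately show "D \<in> untether ?N ` Sigma (chord_diagrams g (Suc n)) fst"
    by blast
qed

lemma sum_chord_diagrams_last_free:
  "(\<Sum>D\<in>{D\<in>chord_diagrams (Suc g) n. Suc (Suc (2 * g + n)) \<notin> fst D}. x ^ crossings D)
    = (\<Sum>i\<le>n. x ^ i) * crossing_sum x g (Suc n)"
proof -
  let ?N = "Suc (Suc (2 * g + n))"
  have "\<forall>D\<in>chord_diagrams g (Suc n). finite (fst D)"
    using mem_chord_diagramsD(3) by auto
  then have Sigma: "(\<Sum>z\<in>Sigma (chord_diagrams g (Suc n)) fst. h z)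
      = (\<Sum>D\<in>chord_diagrams g (Suc n). \<Sum>a\<in>fst D. h (D, a))" for h :: "_ \<Rightarrow> 'a"
    using sum.Sigma[of "chord_diagrams g (Suc n)" fst "\<lambda>D a. h (D, a)"] finite_chord_diagrams
    by (simp add: case_prod_eta)
  have "(\<Sum>a\<in>S. x ^ crossings (untether ?N ((S, M), a))) = x ^ crossings (S, M) * (\<Sum>i\<le>n. x ^ i)"
    if SM: "(S, M) \<in> chord_diagrams g (Suc n)" for S M
  proof -
    have "(\<Sum>a\<in>S. x ^ crossings (untether ?N ((S, M), a)))
        = x ^ crossings (S, M) * (\<Sum>a\<in>S. x ^ card {p\<in>S. a < p})"
      using mem_chord_diagramsD[OF SM] chord_diagram_le[OF mem_chord_diagramsD(1)[OF SM]]
      by (simp add: crossings_untether power_add sum_distrib_left)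
    also have "\<dots> = x ^ crossings (S, M) * (\<Sum>i\<le>n. x ^ i)"
      using mem_chord_diagramsD(2,3)[OF SM]
      by (simp add: sum_card_greater_eq_sum_lessThan lessThan_Suc_atMost)
    finally show ?thesis .
  qed
  then have "(\<Sum>z\<in>Sigma (chord_diagrams g (Suc n)) fst. x ^ crossings (untether ?N z))
      = crossing_sum x g (Suc n) * (\<Sum>i\<le>n. x ^ i)"
    unfolding Sigma crossing_sum_def sum_distrib_right by (intro sum.cong) auto
  then show ?thesis
    unfolding untether_image[symmetric] sum.reindex[OF inj_on_untether] by (simp add: mult.commute)
qed

lemma chord_diagrams_no_tethered: "(S, M) \<in> chord_diagrams f 0 \<Longrightarrow> S = {}"
  using mem_chord_diagramsD(2,3) by fastforce

lemma chord_diagrams_no_free: "(S, M) \<in> chord_diagrams 0 n \<Longrightarrow> S = {1..n}"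
  by (intro card_subset_eq) (auto simp: mem_chord_diagrams_iff chord_diagram_def)

lemma crossing_sum_rec:
  assumes "0 < f + n"
  shows "crossing_sum x f n =
    (case n of 0 \<Rightarrow> 0 | Suc k \<Rightarrow> crossing_sum x f k)
    + (case f of 0 \<Rightarrow> 0 | Suc g \<Rightarrow> (\<Sum>i\<le>n. x ^ i) * crossing_sum x g (Suc n))"
proof -
  obtain N where N: "2 * f + n = Suc N"
    using assms by (cases "2 * f + n") auto
  let ?T = "{D\<in>chord_diagrams f n. Suc N \<in> fst D}"
  let ?F = "{D\<in>chord_diagrams f n. Suc N \<notin> fst D}"
  have "crossing_sum x f n = (\<Sum>D\<in>?T \<union> ?F. x ^ crossings D)"
    unfolding crossing_sum_def by (rule sum.cong) auto
  also have "\<dots> = (\<Sum>D\<in>?T. x ^ crossings D) + (\<Sum>D\<in>?F. x ^ crossings D)"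
    using finite_chord_diagrams[of f n] by (intro sum.union_disjoint) auto
  finally have "crossing_sum x f n = (\<Sum>D\<in>?T. x ^ crossings D) + (\<Sum>D\<in>?F. x ^ crossings D)" .
  moreover have "(\<Sum>D\<in>?T. x ^ crossings D) = (case n of 0 \<Rightarrow> 0 | Suc k \<Rightarrow> crossing_sum x f k)"
  proof (cases n)
    case 0
    then have "?T = {}"
      using chord_diagrams_no_tethered by fastforce
    then show ?thesis
      using 0 by (simp only: sum.empty nat.case)
  next
    case (Suc k)
    then show ?thesis
      using N sum_chord_diagrams_last_tethered[of x f k] by simp
  qed
  moreover have "(\<Sum>D\<in>?F. x ^ crossings D)
      = (case f of 0 \<Rightarrow> 0 | Suc g \<Rightarrow> (\<Sum>i\<le>n. x ^ i) * crossing_sum x g (Suc n))"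
  proof (cases f)
    case 0
    then have "?F = {}"
      using N chord_diagrams_no_free by fastforce
    then show ?thesis
      using 0 by (simp only: sum.empty nat.case)
  next
    case (Suc g)
    then show ?thesis
      using N sum_chord_diagrams_last_free[of x g n] by simp
  qed
  ultimately show ?thesis
    by simp
qed

section \<open>The closed formula\<close>

definition pbw_coeff_formula :: "nat \<Rightarrow> nat \<Rightarrow> qfield" where
  "pbw_coeff_formula f n = qfact n * crossing_sum (qq ^ 2) f n / qden ^ f"

lemma pbw_coeff_formula_rec:
  assumes "0 < f + n"
  shows "pbw_coeff_formula f n =
    (case n of 0 \<Rightarrow> 0 | Suc j \<Rightarrow> qint n * pbw_coeff_formula f j)
    + (case f of 0 \<Rightarrow> 0 | Suc g \<Rightarrow> lower_coeff n * pbw_coeff_formula g (Suc n))"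
proof -
  let ?T = "crossing_sum (qq ^ 2)"
  have tethered: "(case n of 0 \<Rightarrow> 0 | Suc j \<Rightarrow> qint n * pbw_coeff_formula f j)
      = qfact n * (case n of 0 \<Rightarrow> 0 | Suc k \<Rightarrow> ?T f k) / qden ^ f"
    by (cases n) (simp_all add: pbw_coeff_formula_def qfact_Suc)
  have free: "(case f of 0 \<Rightarrow> 0 | Suc g \<Rightarrow> lower_coeff n * pbw_coeff_formula g (Suc n))
      = qfact n * (case f of 0 \<Rightarrow> 0 | Suc g \<Rightarrow> (\<Sum>i\<le>n. (qq ^ 2) ^ i) * ?T g (Suc n)) / qden ^ f"
  proof (cases f)
    case (Suc g)
    have "lower_coeff n * pbw_coeff_formula g (Suc n)
        = qfact n * ((qq ^ n * qint (Suc n)) * ?T g (Suc n)) / qden ^ Suc g"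
      using qden_nonzero by (simp add: pbw_coeff_formula_def lower_coeff_def qfact_Suc field_simps)
    then show ?thesis
      using Suc by (simp add: qint_Suc_eq_geometric_sum)
  qed simp
  have "pbw_coeff_formula f n = qfact n *
      ((case n of 0 \<Rightarrow> 0 | Suc k \<Rightarrow> ?T f k)
       + (case f of 0 \<Rightarrow> 0 | Suc g \<Rightarrow> (\<Sum>i\<le>n. (qq ^ 2) ^ i) * ?T g (Suc n))) / qden ^ f"
    unfolding pbw_coeff_formula_def crossing_sum_rec[OF assms] ..
  then show ?thesis
    unfolding tethered free by (simp add: distrib_left add_divide_distrib)
qed

lemma pbw_coeff_eq_formula: "pbw_coeff (n + 2 * f) n = pbw_coeff_formula f n"
proof (induction "n + 2 * f" arbitrary: n f)
  case 0
  then show ?case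
    by (simp add: pbw_coeff_formula_def qfact_def crossing_sum_0_0)
next
  case (Suc m)
  have "(case n of 0 \<Rightarrow> 0 | Suc j \<Rightarrow> qint n * pbw_coeff m j)
      = (case n of 0 \<Rightarrow> 0 | Suc j \<Rightarrow> qint n * pbw_coeff_formula f j)"
    using Suc by (cases n) (simp_all add: Suc.hyps(1))
  moreover have "lower_coeff n * pbw_coeff m (Suc n)
      = (case f of 0 \<Rightarrow> 0 | Suc g \<Rightarrow> lower_coeff n * pbw_coeff_formula g (Suc n))"
  proof (cases f)
    case 0
    then show ?thesis
      using Suc.hyps(2) by (simp add: pbw_coeff_eq_0)
  next
    case (Suc g)
    then have "m = Suc n + 2 * g"
      using Suc.hyps(2) by simp
    then have "pbw_coeff m (Suc n) = pbw_coeff_formula g (Suc n)"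
      using Suc.hyps(1)[of "Suc n" g] by metis
    then show ?thesis
      using Suc by simp
  qed
  moreover have "0 < f + n"
    using Suc.hyps(2) by arith
  ultimately show ?case
    unfolding Suc.hyps(2)[symmetric] pbw_coeff.simps(2) by (simp add: pbw_coeff_formula_rec)
qed

theorem theorem2p5:
  fixes m n :: nat
  assumes "n \<le> m" and "n mod 2 = m mod 2"
  shows "wcoeff m n =
    (if (\<exists>f. m = n + 2 * f)
     then (let f = (m - n) div 2 in
           qfact n * poly (map_poly of_nat (Tpoly f n)) (qq ^ 2) / (1 - qq powi (-2)) ^ f)
     else 0)"
proof (cases "\<exists>f. m = n + 2 * f")
  case True
  then obtain f where "m = n + 2 * f"
    by blast
  then show ?thesis
    by (simp add: wcoeff_eq_pbw_coeff pbw_coeff_eq_formula pbw_coeff_formula_def poly_Tpoly)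
next
  case False
  then show ?thesis
    using pbw_coeff_nonzeroD[of m n] by (auto simp: wcoeff_eq_pbw_coeff)
qed

end
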